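(* Let $\mu$ be a positive Radon measure on $\mathbb{R}^d$ satisfying the growth condition with constants $C_0>0$, $n\in(0,d]$, and let $1\le q \le p<\infty$. Then for every $f \in \mathcal{C}^p_q(\mu)$ the limit $M(f):=\lim_{Q \in \mathcal{Q}(\mu,2)}m_Q(f)$ exists; that is, there is a number $M(f)$ such that for every $\varepsilon>0$ there is a doubling cube $Q \in \mathcal{Q}(\mu,2)$ with $|m_R(f)-m_Q(f)| \le \varepsilon$ for all $R \in \mathcal{Q}(\mu,2)$ with $R\supset Q$. In particular, there exists an increasing sequence of concentric doubling cubes $I_0 \subset I_1 \subset \cdots \subset I_k \subset \cdots$ such that $\{m_{I_k}(f)\}_{k \ge 0}$ is a Cauchy sequence and $\bigcup_k I_k=\mathbb{R}^d$.
   Context: Growth condition: $\mu(Q(x,l)) \le C_0\,l^n$ for all $x \in \operatorname{supp}(\mu)$ and $l>0$. Cubes are closed with sides parallel to the axes; $Q(x,l)$ is the cube centered at $x$ of side length $l$; $z_Q$, $\ell(Q)$ are center and side length; $\rho Q$ is concentric with $Q$ of side length $\rho\ell(Q)$. $\mathcal{Q}(\mu)$ is the set of cubes of positive $\mu$-measure (including $\mathbb{R}^d$ if $\mu$ is finite). $Q\in\mathcal{Q}(\mu)$ is doubling if $\mu(2Q)\le 2^{d+1}\mu(Q)$; $\mathcal{Q}(\mu,2)$ is the set of doubling cubes, directed by inclusion. For $Q\in\mathcal{Q}(\mu)$, $Q^*$ is the smallest doubling cube of the form $2^jQ$, $j\ge 0$. For $Q\subset R$, $Q\in\mathcal{Q}(\mu)$,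 let $Q_R$ be the smallest cube concentric with $Q$ containing $R$, $\delta(Q,R):=\int_{\ell(Q)}^{\ell(Q_R)} \mu(Q(z_Q,l))\,l^{-n}\,\frac{dl}{l}$ and $K_{Q,R}:=1+\delta(Q,R)$. $m_Q(f):=\mu(Q)^{-1}\int_Q f\,d\mu$. The Campanato space $\mathcal{C}^p_q(\mu)$ is the set of $f\in L^1_{loc}(\mu)$ with \[ \|f : \mathcal{C}^p_q(\mu)\| := \sup_{Q \in \mathcal{Q}(\mu)} \mu(2Q)^{\frac{1}{p}-\frac{1}{q}} \Big(\int_Q|f(x)-m_{Q^*}(f)|^q\,d\mu(x)\Big)^{\frac{1}{q}} + \sup_{Q \subset R,\ Q,R \in \mathcal{Q}(\mu,2)} \mu(Q)^{\frac{1}{p}} \frac{|m_Q(f)-m_R(f)|}{K_{Q,R}}<\infty. \] *)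

theory Defs
  imports "HOL-Analysis.Analysis"
begin

definition cube :: "'a::euclidean_space \<Rightarrow> real \<Rightarrow> 'a set" where
  "cube x l = cbox (x - (l/2) *\<^sub>R One) (x + (l/2) *\<^sub>R One)"

text \<open>Elements of Q(mu): genuine cubes (centre, side) or the whole space.\<close>
datatype 'a cubeQ = Cube 'a real | Whole

fun cset :: "'a::euclidean_space cubeQ \<Rightarrow> 'a set" where
  "cset (Cube z l) = cube z l"
| "cset Whole = UNIV"

fun dil :: "real \<Rightarrow> 'a::euclidean_space cubeQ \<Rightarrow> 'a cubeQ" where
  "dil r (Cube z l) = Cube z (r * l)"
| "dil r Whole = Whole"

definition radon_measure :: "'a::euclidean_space measure \<Rightarrow> bool" where
  "radon_measure \<mu> \<longleftrightarrow> sets \<mu> = sets borel \<and> (\<forall>K. compact K \<longrightarrow> emeasure \<mu> K < \<infinity>)"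

definition supp :: "'a::euclidean_space measure \<Rightarrow> 'a set" where
  "supp \<mu> = {x. \<forall>e>0. 0 < emeasure \<mu> (ball x e)}"

definition growth :: "'a::euclidean_space measure \<Rightarrow> real \<Rightarrow> real \<Rightarrow> bool" where
  "growth \<mu> C0 n \<longleftrightarrow> (\<forall>x\<in>supp \<mu>. \<forall>l>0. measure \<mu> (cube x l) \<le> C0 * l powr n)"

definition cubesQ :: "'a::euclidean_space measure \<Rightarrow> 'a cubeQ set" where
  "cubesQ \<mu> = {Cube z l | z l. 0 < l \<and> 0 < emeasure \<mu> (cube z l)}
              \<union> {Whole | _::unit. emeasure \<mu> UNIV < \<infinity>}"

definition doubling :: "'a::euclidean_space measure \<Rightarrow> 'a cubeQ \<Rightarrow> bool" where
  "doubling \<mu> Q \<longleftrightarrow> Q \<in> cubesQ \<mu> \<and>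
     measure \<mu> (cset (dil 2 Q)) \<le> 2 ^ (DIM('a) + 1) * measure \<mu> (cset Q)"

definition cubesQ2 :: "'a::euclidean_space measure \<Rightarrow> 'a cubeQ set" where
  "cubesQ2 \<mu> = {Q. doubling \<mu> Q}"

definition star :: "'a::euclidean_space measure \<Rightarrow> 'a cubeQ \<Rightarrow> 'a cubeQ" where
  "star \<mu> Q = dil (2 ^ (LEAST j::nat. doubling \<mu> (dil (2 ^ j) Q))) Q"

definition mean :: "'a::euclidean_space measure \<Rightarrow> 'a cubeQ \<Rightarrow> ('a \<Rightarrow> real) \<Rightarrow> real" where
  "mean \<mu> Q f = (LINT x:cset Q|\<mu>. f x) / measure \<mu> (cset Q)"

text \<open>Side length of Q_R, the smallest cube concentric with Q (centre z) containing R
  (R a genuine cube); it is attained since cubes are closed.\<close>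
definition outer_side :: "'a::euclidean_space \<Rightarrow> 'a set \<Rightarrow> real" where
  "outer_side z R = Inf {l. 0 < l \<and> R \<subseteq> cube z l}"

fun delta :: "'a::euclidean_space measure \<Rightarrow> real \<Rightarrow> 'a cubeQ \<Rightarrow> 'a cubeQ \<Rightarrow> real" where
  "delta \<mu> n (Cube z l) (Cube c s) =
     enn2real (\<integral>\<^sup>+ t\<in>{l..outer_side z (cube c s)}.
                 ennreal (measure \<mu> (cube z t) * t powr (-n) / t) \<partial>lborel)"
| "delta \<mu> n (Cube z l) Whole =
     enn2real (\<integral>\<^sup>+ t\<in>{l..}. ennreal (measure \<mu> (cube z t) * t powr (-n) / t) \<partial>lborel)"
| "delta \<mu> n Whole R = 0"

definition Kconst :: "'a::euclidean_space measure \<Rightarrow> real \<Rightarrow> 'a cubeQ \<Rightarrow> 'a cubeQ \<Rightarrow> real" where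
  "Kconst \<mu> n Q R = 1 + delta \<mu> n Q R"

definition L1_loc :: "'a::euclidean_space measure \<Rightarrow> ('a \<Rightarrow> real) \<Rightarrow> bool" where
  "L1_loc \<mu> f \<longleftrightarrow> f \<in> borel_measurable \<mu> \<and> (\<forall>K. compact K \<longrightarrow> set_integrable \<mu> K f)"

text \<open>f in the Campanato space C^p_q(mu): both suprema in the norm are finite
  (the L^q integrals being finite in particular).\<close>
definition campanato ::
  "'a::euclidean_space measure \<Rightarrow> real \<Rightarrow> real \<Rightarrow> real \<Rightarrow> ('a \<Rightarrow> real) \<Rightarrow> bool" where
  "campanato \<mu> n p q f \<longleftrightarrow> L1_loc \<mu> f \<and>
     (\<exists>B. \<forall>Q\<in>cubesQ \<mu>.
        set_integrable \<mu> (cset Q) (\<lambda>x. \<bar>f x - mean \<mu> (star \<mu> Q) f\<bar> powr q) \<and>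
        measure \<mu> (cset (dil 2 Q)) powr (1/p - 1/q) *
          (LINT x:cset Q|\<mu>. \<bar>f x - mean \<mu> (star \<mu> Q) f\<bar> powr q) powr (1/q) \<le> B) \<and>
     (\<exists>B. \<forall>Q\<in>cubesQ2 \<mu>. \<forall>R\<in>cubesQ2 \<mu>. cset Q \<subseteq> cset R \<longrightarrow>
        measure \<mu> (cset Q) powr (1/p) * \<bar>mean \<mu> Q f - mean \<mu> R f\<bar> / Kconst \<mu> n Q R \<le> B)"

end

theory Submission
  imports Defs
begin

text \<open>
  Fix a point \<open>z\<close> of the support and consider the cubes centred at \<open>z\<close> with dyadic side
  lengths. A non-doubling step multiplies the measure by \<open>2^(d+1)\<close>, while the growth condition
  only allows growth like \<open>l^n\<close> with \<open>n \<le> d\<close>. Hence there are doubling cubes among them at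
  arbitrarily large scales, and \<open>K(Q,R)\<close> stays bounded between consecutive ones, as well as
  between a doubling cube \<open>R\<close> and the first doubling dyadic cube of side at least twice that
  of \<open>R\<close>. The two parts of the Campanato norm then give \<open>|m\<^sub>Q(f) - m\<^sub>R(f)| \<le> C \<mu>(Q)^(-1/p)\<close>,
  first for consecutive doubling cubes and for cubes of comparable measure, then, summing a
  geometric series, for every doubling \<open>R\<close> containing a doubling dyadic cube \<open>Q\<close>.
  If \<open>\<mu>(\<real>\<^sup>d) = \<infinity>\<close> these bounds tend to 0, which gives the limit. If \<open>\<mu>\<close> is finite,
  \<open>\<real>\<^sup>d\<close> itself is the largest doubling cube, \<open>f\<close> is integrable, and the means over the
  exhausting dyadic cubes converge to the mean of \<open>f\<close> over \<open>\<real>\<^sup>d\<close>.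
\<close>

section \<open>Cubes\<close>

lemma mem_cube: "x \<in> cube z l \<longleftrightarrow> (\<forall>i\<in>Basis. \<bar>x \<bullet> i - z \<bullet> i\<bar> \<le> l/2)"
proof -
  have "(z \<bullet> i - l/2 \<le> x \<bullet> i \<and> x \<bullet> i \<le> z \<bullet> i + l/2) \<longleftrightarrow> \<bar>x \<bullet> i - z \<bullet> i\<bar> \<le> l/2" for i
    by (cases "x \<bullet> i \<le> z \<bullet> i") (auto simp: abs_if field_simps)
  then show ?thesis
    unfolding cube_def mem_box by (simp add: inner_diff_left inner_add_left)
qed

lemma cube_mono: "l \<le> l' \<Longrightarrow> cube z l \<subseteq> cube z l'"
  by (auto simp: mem_cube) (smt (verit, best))

lemma centre_in_cube: "0 \<le> l \<Longrightarrow> z \<in> cube z l"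
  by (auto simp: mem_cube)

lemma mem_cube_commute: "z \<in> cube w l \<longleftrightarrow> w \<in> cube z l"
  by (auto simp: mem_cube abs_minus_commute)

lemma cube_subset_shifted_cube: "z \<in> cube w L \<Longrightarrow> cube w t \<subseteq> cube z (t + L)"
  by (auto simp: mem_cube) (smt (verit, best))

lemma cube_side_le_if_subset:
  assumes "0 < a" "cube z a \<subseteq> cube w b"
  shows "a \<le> b"
proof -
  obtain i :: 'a where i: "i \<in> Basis" using nonempty_Basis by blast
  have "z + (a/2) *\<^sub>R i \<in> cube z a" "z - (a/2) *\<^sub>R i \<in> cube z a"
    using assms(1) i by (auto simp: mem_cube inner_Basis inner_add_left inner_diff_left)
  then have "z + (a/2) *\<^sub>R i \<in> cube w b" "z - (a/2) *\<^sub>R i \<in> cube w b"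
    using assms(2) by auto
  then have "\<bar>z \<bullet> i + a/2 - w \<bullet> i\<bar> \<le> b/2" "\<bar>z \<bullet> i - a/2 - w \<bullet> i\<bar> \<le> b/2"
    using i by (auto simp: mem_cube inner_add_left inner_diff_left)
  then show ?thesis by linarith
qed

lemma compact_cube: "compact (cube z l)"
  by (simp add: cube_def)

lemma cube_neq_UNIV: "cube z l \<noteq> UNIV"
  using compact_cube[of z l] not_bounded_UNIV compact_imp_bounded by metis

lemma ball_subset_cube: "ball z (l/2) \<subseteq> cube z l"
proof
  fix x assume "x \<in> ball z (l/2)"
  then have "norm (x - z) < l/2"
    by (simp add: dist_norm norm_minus_commute)
  moreover have "\<bar>x \<bullet> i - z \<bullet> i\<bar> \<le> norm (x - z)" if "i \<in> Basis" for i
    using Basis_le_norm[OF that, of "x - z"] by (simp add: inner_diff_left)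
  ultimately show "x \<in> cube z l"
    unfolding mem_cube by force
qed

lemma UN_cube_eq_UNIV:
  assumes "\<And>k. real k \<le> s k"
  shows "(\<Union>k. cube z (s k)) = UNIV"
proof -
  have "x \<in> (\<Union>k. cube z (s k))" for x
  proof -
    obtain k :: nat where k: "2 * norm (x - z) \<le> real k"
      using real_arch_simple by blast
    have "x \<in> cube z (s k)"
      unfolding mem_cube
    proof
      fix i :: 'a assume "i \<in> Basis"
      then have "\<bar>(x - z) \<bullet> i\<bar> \<le> norm (x - z)"
        by (rule Basis_le_norm)
      then show "\<bar>x \<bullet> i - z \<bullet> i\<bar> \<le> s k / 2"
        using k assms[of k] by (simp add: inner_diff_left)
    qed
    then show ?thesis
      by blast
  qed
  then show ?thesis
    by blast
qed

lemma le_add_powr_scaled: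
  fixes t X q :: real
  assumes "0 \<le> t" "0 < X" "1 \<le> q"
  shows "t \<le> X + X powr (1 - q) * t powr q"
proof (cases "t \<le> X")
  case True
  then show ?thesis by (simp add: add_increasing2)
next
  case False
  have "1 = X powr (1 - q) * X powr (q - 1)"
    using assms by (simp add: powr_add[symmetric])
  also have "\<dots> \<le> X powr (1 - q) * t powr (q - 1)"
    using False assms by (intro mult_left_mono powr_mono2) auto
  finally have "t * 1 \<le> t * (X powr (1 - q) * t powr (q - 1))"
    using assms by (intro mult_left_mono) auto
  also have "\<dots> = X powr (1 - q) * t powr q"
    using False assms by (simp add: powr_diff mult.commute)
  finally have "t \<le> X powr (1 - q) * t powr q"
    by simp
  then show ?thesis
    using assms by linarith
qed

lemma powr_le_of_scaled_root_le:
  fixes a b I B p q :: real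
  assumes a: "0 < a" and b: "0 < b" and I: "0 \<le> I" and q: "0 < q"
    and root: "a powr (1/p - 1/q) * I powr (1/q) \<le> B"
  shows "I \<le> (B * a powr (1/q - 1/p) * b powr (-1/q)) powr q * b"
proof -
  have "I powr (1/q) \<le> B / a powr (1/p - 1/q)"
    using root a by (simp add: le_divide_eq mult.commute)
  moreover have "a powr (1/q - 1/p) = inverse (a powr (1/p - 1/q))"
    using powr_minus[of a "1/p - 1/q"] by simp
  ultimately have "I powr (1/q) \<le> B * a powr (1/q - 1/p)"
    by (simp add: divide_inverse)
  then have "(I powr (1/q)) powr q \<le> (B * a powr (1/q - 1/p)) powr q"
    using I q by (intro powr_mono2) auto
  moreover have "(I powr (1/q)) powr q = I"
    using I q by (simp add: powr_powr)
  moreover have "(b powr (-1/q)) powr q * b = 1"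
  proof -
    have "(b powr (-1/q)) powr q = b powr (-1)"
      by (subst powr_powr) (use q in simp)
    then show ?thesis
      using b by (simp add: powr_minus)
  qed
  moreover have "0 \<le> a powr (1/p - 1/q) * I powr (1/q)"
    by simp
  then have "0 \<le> B"
    using root by linarith
  ultimately show ?thesis
    using a b by (simp add: powr_mult mult.assoc)
qed

lemma powr_le_of_le_mult:
  fixes a b C p q :: real
  assumes b: "0 < b" and a: "0 \<le> a" "a \<le> C * b" and q: "0 < q" "q \<le> p"
  shows "b powr (-1/q) * a powr (1/q - 1/p) \<le> C powr (1/q - 1/p) * b powr (-1/p)"
proof -
  have \<kappa>: "0 \<le> 1/q - 1/p"
    using q by (simp add: field_simps)
  have "0 \<le> C * b"
    using a by linarith
  then have C: "0 \<le> C"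
    using b by (simp add: zero_le_mult_iff)
  have "a powr (1/q - 1/p) \<le> (C * b) powr (1/q - 1/p)"
    using a \<kappa> by (intro powr_mono2) auto
  also have "\<dots> = C powr (1/q - 1/p) * b powr (1/q - 1/p)"
    using b C by (simp add: powr_mult)
  finally have "b powr (-1/q) * a powr (1/q - 1/p)
      \<le> C powr (1/q - 1/p) * (b powr (-1/q) * b powr (1/q - 1/p))"
    by (simp add: mult_left_mono mult_ac)
  also have "b powr (-1/q) * b powr (1/q - 1/p) = b powr (-1/p)"
    using b by (simp add: powr_add[symmetric] diff_divide_distrib)
  finally show ?thesis .
qed
lemma exists_power_of_two_between:
  fixes u :: real
  assumes "1 \<le> u"
  shows "\<exists>e::nat. u < 2 ^ e \<and> 2 ^ e \<le> 2 * u"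
proof -
  define e where "e = (LEAST e::nat. u < 2 ^ e)"
  obtain k :: nat where "u \<le> real k"
    using real_arch_simple by blast
  then have "u < 2 ^ k"
    using of_nat_less_two_power[of k, where 'a=real] by linarith
  then have ue: "u < 2 ^ e"
    unfolding e_def by (rule LeastI)
  have "e \<noteq> 0"
  proof
    assume "e = 0"
    then show False
      using ue assms by simp
  qed
  then obtain e' where e': "e = Suc e'"
    using not0_implies_Suc by blast
  then have "\<not> u < 2 ^ e'"
    using not_less_Least[of e' "\<lambda>e. u < (2::real) ^ e"] by (simp add: e_def)
  then show ?thesis
    using ue e' by (intro exI[of _ e]) simp
qed

lemma convergent_if_tail_bound:
  fixes X r :: "nat \<Rightarrow> real"
  assumes tail: "\<And>k l. k \<le> l \<Longrightarrow> \<bar>X k - X l\<bar> \<le> r k" and r: "r \<longlonglongrightarrow> 0"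
  shows "\<exists>L. X \<longlonglongrightarrow> L \<and> (\<forall>k. \<bar>X k - L\<bar> \<le> r k)"
proof -
  have "Cauchy X"
  proof (rule CauchyI)
    fix e :: real assume "0 < e"
    then obtain N where N: "\<forall>k\<ge>N. norm (r k - 0) < e/2"
      using LIMSEQ_D[OF r, of "e/2"] by auto
    show "\<exists>N. \<forall>m\<ge>N. \<forall>n\<ge>N. norm (X m - X n) < e"
    proof (intro exI[of _ N] allI impI)
      fix m n assume "N \<le> m" "N \<le> n"
      then have "\<bar>X N - X m\<bar> \<le> r N" "\<bar>X N - X n\<bar> \<le> r N"
        using tail by auto
      then show "norm (X m - X n) < e"
        using N by auto
    qed
  qed
  then have lim: "X \<longlonglongrightarrow> lim X"
    by (simp add: Cauchy_convergent_iff convergent_LIMSEQ_iff)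
  have "\<bar>X k - lim X\<bar> \<le> r k" for k
  proof (rule LIMSEQ_le_const2)
    show "(\<lambda>l. \<bar>X k - X l\<bar>) \<longlonglongrightarrow> \<bar>X k - lim X\<bar>"
      by (intro tendsto_intros lim)
    show "\<exists>N. \<forall>l\<ge>N. \<bar>X k - X l\<bar> \<le> r k"
      using tail by blast
  qed
  then show ?thesis
    using lim by blast
qed

lemma exists_last_before:
  fixes P :: "nat \<Rightarrow> bool"
  assumes "P e" "e < h"
  shows "\<exists>g. e \<le> g \<and> g < h \<and> P g \<and> (\<forall>x. g < x \<longrightarrow> x < h \<longrightarrow> \<not> P x)"
proof -
  define G where "G = {x. P x \<and> x < h}"
  have "finite G" "e \<in> G"
    using assms by (auto simp: G_def)
  then have "Max G \<in> G" "e \<le> Max G"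
    using Max_in by auto
  show ?thesis
  proof (intro exI[of _ "Max G"] conjI allI impI)
    show "e \<le> Max G" "Max G < h" "P (Max G)"
      using \<open>Max G \<in> G\<close> \<open>e \<le> Max G\<close> by (auto simp: G_def)
    fix x assume "Max G < x" "x < h"
    show "\<not> P x"
    proof
      assume "P x"
      then have "x \<le> Max G"
        using \<open>finite G\<close> \<open>x < h\<close> by (simp add: G_def)
      then show False
        using \<open>Max G < x\<close> by simp
    qed
  qed
qed

section \<open>Averages\<close>

lemma set_integral_mono_set_nonneg:
  fixes h :: "_ \<Rightarrow> real"
  assumes "set_integrable M B h" "A \<in> sets M" "A \<subseteq> B" "\<And>x. 0 \<le> h x"
  shows "(LINT x:A|M. h x) \<le> (LINT x:B|M. h x)"
proof -
  have "set_integrable M A h"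
    using assms set_integrable_subset by blast
  then show ?thesis
    using assms unfolding set_lebesgue_integral_def set_integrable_def
    by (intro integral_mono) (auto split: split_indicator)
qed

lemma set_average_dist_le:
  fixes g :: "_ \<Rightarrow> real"
  assumes A: "A \<in> sets M" and B: "B \<in> sets M" and AB: "A \<subseteq> B"
    and fin: "emeasure M A < \<infinity>" and mA: "0 < measure M A"
    and ig: "set_integrable M A g" and ih: "set_integrable M B (\<lambda>x. \<bar>g x - c\<bar> powr q)"
    and q: "1 \<le> q" and X: "0 < X"
    and osc: "(LINT x:B|M. \<bar>g x - c\<bar> powr q) \<le> X powr q * measure M A"
  shows "\<bar>(LINT x:A|M. g x) / measure M A - c\<bar> \<le> 2 * X"
proof -
  have ihA: "set_integrable M A (\<lambda>x. \<bar>g x - c\<bar> powr q)"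
    using ih A AB set_integrable_subset by blast
  have ic: "set_integrable M A (\<lambda>x. d)" for d :: real
    using A fin unfolding set_integrable_def by (simp add: integrable_real_indicator)
  have igc: "set_integrable M A (\<lambda>x. g x - c)"
    using ig ic by (rule set_integral_diff)
  have "\<bar>(LINT x:A|M. g x) - measure M A * c\<bar> = \<bar>LINT x:A|M. g x - c\<bar>"
    using ig ic A fin by (simp add: set_integral_diff set_integral_const)
  also have "\<dots> \<le> (LINT x:A|M. \<bar>g x - c\<bar>)"
    using set_integral_norm_bound[OF igc] by simp
  also have "\<dots> \<le> (LINT x:A|M. X + X powr (1 - q) * \<bar>g x - c\<bar> powr q)"
    using igc ic ihA le_add_powr_scaled[OF _ X q]
    by (intro set_integral_mono set_integral_add set_integrable_abs) auto
  also have "\<dots> = X * measure M A + X powr (1 - q) * (LINT x:A|M. \<bar>g x - c\<bar> powr q)"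
    using ic ihA A fin by (simp add: set_integral_add set_integral_const)
  also have "\<dots> \<le> X * measure M A + X powr (1 - q) * (LINT x:B|M. \<bar>g x - c\<bar> powr q)"
    using set_integral_mono_set_nonneg[OF ih A AB] by (intro add_left_mono mult_left_mono) auto
  also have "\<dots> \<le> X * measure M A + X powr (1 - q) * (X powr q * measure M A)"
    using osc by (intro add_left_mono mult_left_mono) auto
  also have "\<dots> = 2 * X * measure M A"
    using X by (simp add: powr_add[symmetric] mult.assoc[symmetric])
  finally have "\<bar>(LINT x:A|M. g x) - measure M A * c\<bar> \<le> 2 * X * measure M A" .
  moreover have "(LINT x:A|M. g x) / measure M A - c = ((LINT x:A|M. g x) - measure M A * c) / measure M A"
    using mA by (simp add: field_simps)
  ultimately show ?thesis
    using mA by (simp add: abs_div divide_le_eq)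
qed

lemma integrable_if_integrable_powr_dist:
  fixes f :: "_ \<Rightarrow> real"
  assumes "finite_measure M" "f \<in> borel_measurable M"
    and "integrable M (\<lambda>x. \<bar>f x - c\<bar> powr q)" "1 \<le> q"
  shows "integrable M f"
proof -
  interpret finite_measure M by fact
  show ?thesis
  proof (rule Bochner_Integration.integrable_bound)
    show "integrable M (\<lambda>x. 1 + \<bar>c\<bar> + \<bar>f x - c\<bar> powr q)"
      using assms(3) by (intro Bochner_Integration.integrable_add integrable_const)
    have "norm (f x) \<le> norm (1 + \<bar>c\<bar> + \<bar>f x - c\<bar> powr q)" for x
    proof -
      have "\<bar>f x - c\<bar> \<le> 1 + 1 powr (1 - q) * \<bar>f x - c\<bar> powr q"
        using assms(4) by (intro le_add_powr_scaled) auto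
      then have "\<bar>f x\<bar> \<le> 1 + \<bar>c\<bar> + \<bar>f x - c\<bar> powr q"
        by simp
      then show ?thesis
        by simp
    qed
    then show "AE x in M. norm (f x) \<le> norm (1 + \<bar>c\<bar> + \<bar>f x - c\<bar> powr q)"
      by simp
  qed fact
qed

lemma tendsto_set_average_exhaustion:
  fixes f :: "_ \<Rightarrow> real"
  assumes "finite_measure M" "integrable M f" "incseq A" "\<And>k. A k \<in> sets M"
    and "(\<Union>k. A k) = space M" "measure M (space M) \<noteq> 0"
  shows "(\<lambda>k. (LINT x:A k|M. f x) / measure M (A k))
           \<longlonglongrightarrow> (LINT x:space M|M. f x) / measure M (space M)"
proof -
  interpret finite_measure M by fact
  have "set_integrable M (\<Union>k. A k) f"
    unfolding assms(5) set_integrable_def by (rule integrable_mult_indicator[OF sets.top assms(2)])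
  then have "(\<lambda>k. LINT x:A k|M. f x) \<longlonglongrightarrow> (LINT x:(\<Union>k. A k)|M. f x)"
    using assms(3,4) by (intro set_integral_cont_up) auto
  moreover have "(\<lambda>k. measure M (A k)) \<longlonglongrightarrow> measure M (\<Union>k. A k)"
    using assms(3,4) by (intro Lim_measure_incseq) auto
  ultimately show ?thesis
    using assms(5,6) by (intro tendsto_divide) auto
qed

section \<open>Measures with polynomial growth\<close>

lemma star_doubling: "doubling \<mu> Q \<Longrightarrow> star \<mu> Q = Q"
proof -
  assume "doubling \<mu> Q"
  moreover have "dil 1 Q = Q"
    by (cases Q) auto
  ultimately have "(LEAST j::nat. doubling \<mu> (dil (2 ^ j) Q)) = 0"
    by (intro Least_eq_0) simp
  then show "star \<mu> Q = Q"
    using \<open>dil 1 Q = Q\<close> by (simp add: star_def)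
qed

lemma Kconst_ge_1: "1 \<le> Kconst \<mu> n Q R"
proof -
  have "0 \<le> delta \<mu> n Q R"
    by (cases Q; cases R) auto
  then show ?thesis
    by (simp add: Kconst_def)
qed

lemma Whole_in_cubesQ2_iff: "Whole \<in> cubesQ2 \<mu> \<longleftrightarrow> emeasure \<mu> UNIV < \<infinity>"
proof -
  have "1 * measure \<mu> UNIV \<le> 2 ^ (DIM('a) + 1) * measure \<mu> UNIV"
    by (intro mult_right_mono) (auto simp del: power_Suc simp: one_le_power)
  then show ?thesis
    by (auto simp: cubesQ2_def doubling_def cubesQ_def)
qed

lemma UNIV_subset_cset_iff: "UNIV \<subseteq> cset R \<longleftrightarrow> R = Whole"
  using cube_neq_UNIV by (cases R) auto

definition doubling_limit :: "'a::euclidean_space measure \<Rightarrow> ('a \<Rightarrow> real) \<Rightarrow> real \<Rightarrow> bool" where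
  "doubling_limit \<mu> f M \<longleftrightarrow>
     (\<forall>\<epsilon>>0. \<exists>Q\<in>cubesQ2 \<mu>. \<forall>R\<in>cubesQ2 \<mu>. cset Q \<subseteq> cset R \<longrightarrow> \<bar>mean \<mu> R f - M\<bar> \<le> \<epsilon>)"

locale growth_measure =
  fixes \<mu> :: "'a::euclidean_space measure" and C0 n :: real
  assumes radon: "radon_measure \<mu>" and C0_pos: "0 < C0"
    and n_pos: "0 < n" and n_le_DIM: "n \<le> DIM('a)"
    and growth: "growth \<mu> C0 n"
begin

lemma sets_eq_borel: "sets \<mu> = sets borel"
  using radon by (simp add: radon_measure_def)

lemma space_eq_UNIV: "space \<mu> = UNIV"
  using sets_eq_imp_space_eq[OF sets_eq_borel] by simp

lemma borel_in_sets: "A \<in> sets borel \<Longrightarrow> A \<in> sets \<mu>"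
  by (simp add: sets_eq_borel)

lemma cube_in_sets [measurable]: "cube z l \<in> sets \<mu>"
  by (rule borel_in_sets) (simp add: cube_def borel_closed)

lemma emeasure_cube_finite: "emeasure \<mu> (cube z l) < \<infinity>"
  using radon compact_cube unfolding radon_measure_def by blast

lemma emeasure_cube: "emeasure \<mu> (cube z l) = ennreal (measure \<mu> (cube z l))"
  using emeasure_cube_finite[of z l] by (intro emeasure_eq_ennreal_measure) simp

lemma measure_cube_mono: "cube w t \<subseteq> cube z l \<Longrightarrow> measure \<mu> (cube w t) \<le> measure \<mu> (cube z l)"
  using emeasure_cube_finite by (intro measure_mono_fmeasurable) (auto simp: fmeasurable_def)

lemma supp_nonempty:
  assumes "0 < emeasure \<mu> UNIV"
  shows "\<exists>z. z \<in> supp \<mu>"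
proof (rule ccontr)
  assume "\<nexists>z. z \<in> supp \<mu>"
  then have "\<forall>x. \<exists>e>0. emeasure \<mu> (ball x e) = 0"
    unfolding supp_def by (auto simp: not_less)
  then obtain e where e: "\<And>x. 0 < e x" "\<And>x. emeasure \<mu> (ball x (e x)) = 0"
    by metis
  have "emeasure \<mu> (cube 0 (real k)) = 0" for k :: nat
  proof -
    obtain C where C: "C \<subseteq> cube 0 (real k)" "finite C" "cube 0 (real k) \<subseteq> (\<Union>c\<in>C. ball c (e c))"
    proof (rule compactE_image[OF compact_cube, of "cube 0 (real k)" "\<lambda>c. ball c (e c)"])
      show "open (ball c (e c))" for c
        by simp
      show "cube 0 (real k) \<subseteq> (\<Union>c\<in>cube 0 (real k). ball c (e c))"
        using e(1) by force
    qed blast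
    have "emeasure \<mu> (cube 0 (real k)) \<le> emeasure \<mu> (\<Union>c\<in>C. ball c (e c))"
      by (intro emeasure_mono C(3)) (auto intro!: borel_in_sets sets.finite_UN C(2))
    also have "\<dots> \<le> (\<Sum>c\<in>C. emeasure \<mu> (ball c (e c)))"
      by (intro emeasure_subadditive_finite C(2)) (auto intro!: borel_in_sets)
    also have "\<dots> = 0"
      using e(2) by simp
    finally show ?thesis
      by simp
  qed
  then have "emeasure \<mu> (\<Union>k. cube 0 (real k)) = 0"
    by (intro emeasure_UN_eq_0) auto
  moreover have "(\<Union>k. cube (0::'a) (real k)) = UNIV"
    by (rule UN_cube_eq_UNIV) simp
  ultimately show False
    using assms by simp
qed

lemma measure_cube_pos:
  assumes "z \<in> supp \<mu>" "0 < l"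
  shows "0 < measure \<mu> (cube z l)"
proof -
  have "0 < emeasure \<mu> (ball z (l/2))"
    using assms unfolding supp_def by auto
  also have "\<dots> \<le> emeasure \<mu> (cube z l)"
    by (intro emeasure_mono ball_subset_cube) auto
  finally show ?thesis
    by (simp add: emeasure_cube)
qed

lemma measure_cube_growth: "z \<in> supp \<mu> \<Longrightarrow> 0 < l \<Longrightarrow> measure \<mu> (cube z l) \<le> C0 * l powr n"
  using growth by (auto simp: growth_def)

lemma doubling_Cube_iff:
  "doubling \<mu> (Cube z l) \<longleftrightarrow> 0 < l \<and> 0 < measure \<mu> (cube z l) \<and>
     measure \<mu> (cube z (2 * l)) \<le> 2 ^ (DIM('a) + 1) * measure \<mu> (cube z l)"
  by (auto simp: doubling_def cubesQ_def emeasure_cube)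

lemma measure_double_cube_if_not_doubling:
  assumes "0 < l" "\<not> doubling \<mu> (Cube w l)"
  shows "2 ^ (DIM('a) + 1) * measure \<mu> (cube w l) \<le> measure \<mu> (cube w (2 * l))"
proof (cases "0 < measure \<mu> (cube w l)")
  case True
  then show ?thesis
    using assms by (auto simp: doubling_Cube_iff)
next
  case False
  then have "measure \<mu> (cube w l) = 0"
    using measure_nonneg[of \<mu> "cube w l"] by linarith
  then show ?thesis
    by simp
qed

lemma outer_side_le: "0 < T \<Longrightarrow> R \<subseteq> cube z T \<Longrightarrow> outer_side z R \<le> T"
  unfolding outer_side_def by (intro cInf_lower) (auto intro: bdd_belowI[of _ 0])

lemma delta_le_of_measure_bound:
  assumes l: "0 < l" "l \<le> T" and sub: "cube c s \<subseteq> cube z T" and A: "0 \<le> A"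
    and bound: "\<And>t. l \<le> t \<Longrightarrow> t \<le> T \<Longrightarrow> measure \<mu> (cube z t) \<le> A * t powr (real DIM('a) + 1)"
  shows "delta \<mu> n (Cube z l) (Cube c s) \<le> A * T powr (real DIM('a) + 1 - n)"
proof -
  define D where "D = real DIM('a) - n"
  have T: "0 < T" "outer_side z (cube c s) \<le> T"
    using l outer_side_le[OF _ sub] by auto
  have D: "0 \<le> D"
    using n_le_DIM by (simp add: D_def)
  have integrand_le: "ennreal (measure \<mu> (cube z t) * t powr (-n) / t) * indicator {l..outer_side z (cube c s)} t
      \<le> ennreal (A * T powr D) * indicator {l..T} t" for t
  proof (cases "l \<le> t \<and> t \<le> outer_side z (cube c s)")
    case True
    then have t: "l \<le> t" "t \<le> T" "0 < t"
      using T l by auto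
    have "measure \<mu> (cube z t) * t powr (-n) / t \<le> A * t powr (real DIM('a) + 1) * t powr (-n) / t"
      using bound[OF t(1,2)] t by (intro divide_right_mono mult_right_mono) auto
    also have "\<dots> = A * t powr D"
    proof -
      have "t powr (real DIM('a) + 1) = t powr (D + n + 1)"
        by (simp add: D_def)
      also have "\<dots> = t powr D * t powr n * t"
        unfolding powr_add using t by simp
      finally have "t powr (real DIM('a) + 1) = t powr D * t powr n * t" .
      moreover have "t powr n * t powr (-n) = 1"
        using t by (simp add: powr_add[symmetric])
      ultimately show ?thesis
        using t by (simp add: field_simps)
    qed
    also have "\<dots> \<le> A * T powr D"
      using t D A by (intro mult_left_mono powr_mono2) auto
    finally show ?thesis
      using True T by (auto simp: indicator_def intro: ennreal_leI)
  qed (auto simp: indicator_def)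
  have "(\<integral>\<^sup>+ t\<in>{l..outer_side z (cube c s)}. ennreal (measure \<mu> (cube z t) * t powr (-n) / t) \<partial>lborel)
      \<le> (\<integral>\<^sup>+ t. ennreal (A * T powr D) * indicator {l..T} t \<partial>lborel)"
    by (intro nn_integral_mono integrand_le)
  also have "\<dots> = ennreal (A * T powr D * (T - l))"
    using l A by (simp add: nn_integral_cmult_indicator ennreal_mult)
  also have "\<dots> \<le> ennreal (A * T powr (D + 1))"
  proof (intro ennreal_leI)
    have "A * T powr D * (T - l) \<le> A * T powr D * T"
      using l A by (intro mult_left_mono) auto
    also have "\<dots> = A * T powr (D + 1)"
      using T by (simp add: powr_add)
    finally show "A * T powr D * (T - l) \<le> A * T powr (D + 1)" .
  qed
  finally show ?thesis
    using A T by (simp add: enn2real_leI D_def algebra_simps)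
qed

definition Kmax :: real where
  "Kmax = 1 + C0 * 8 ^ (DIM('a) + 1)"

lemma Kmax_pos: "0 < Kmax"
  using C0_pos by (simp add: Kmax_def add_pos_nonneg)

lemma mean_diff_le_oscillation:
  fixes f :: "'a \<Rightarrow> real" and p q B :: real
  assumes dQ: "doubling \<mu> (Cube c s)" and dR: "doubling \<mu> (Cube w L)"
    and sub: "cube c s \<subseteq> cube w L" and f: "set_integrable \<mu> (cube c s) f"
    and osc_int: "set_integrable \<mu> (cube w L) (\<lambda>x. \<bar>f x - mean \<mu> (Cube w L) f\<bar> powr q)"
    and osc: "measure \<mu> (cube w (2 * L)) powr (1/p - 1/q) *
      (LINT x:cube w L|\<mu>. \<bar>f x - mean \<mu> (Cube w L) f\<bar> powr q) powr (1/q) \<le> B"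
    and B: "0 < B" and q: "1 \<le> q"
  shows "\<bar>mean \<mu> (Cube c s) f - mean \<mu> (Cube w L) f\<bar>
    \<le> 2 * B * measure \<mu> (cube c s) powr (-1/q) * measure \<mu> (cube w (2 * L)) powr (1/q - 1/p)"
proof -
  define X where "X = B * measure \<mu> (cube w (2 * L)) powr (1/q - 1/p) * measure \<mu> (cube c s) powr (-1/q)"
  have b: "0 < measure \<mu> (cube c s)"
    using dQ by (simp add: doubling_Cube_iff)
  have "0 < measure \<mu> (cube w L)" "measure \<mu> (cube w L) \<le> measure \<mu> (cube w (2 * L))"
    using dR unfolding doubling_Cube_iff by (auto intro!: measure_cube_mono cube_mono)
  then have a: "0 < measure \<mu> (cube w (2 * L))"
    by linarith
  have "0 \<le> (LINT x:cube w L|\<mu>. \<bar>f x - mean \<mu> (Cube w L) f\<bar> powr q)"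
    unfolding set_lebesgue_integral_def
    by (rule Bochner_Integration.integral_nonneg) (auto simp: indicator_def)
  then have osc': "(LINT x:cube w L|\<mu>. \<bar>f x - mean \<mu> (Cube w L) f\<bar> powr q) \<le> X powr q * measure \<mu> (cube c s)"
    unfolding X_def using a b q osc by (intro powr_le_of_scaled_root_le) auto
  have "0 < X"
    using B a b by (simp add: X_def)
  then have "\<bar>(LINT x:cube c s|\<mu>. f x) / measure \<mu> (cube c s) - mean \<mu> (Cube w L) f\<bar> \<le> 2 * X"
    by (rule set_average_dist_le[OF cube_in_sets cube_in_sets sub emeasure_cube_finite b f osc_int q _ osc'])
  then show ?thesis
    by (simp add: mean_def X_def mult_ac)
qed

lemma campanato_mean_diff_comparable:
  assumes q: "1 \<le> q" "q \<le> p" and f: "campanato \<mu> n p q f"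
  shows "\<exists>CA\<ge>0. \<forall>c s w L. doubling \<mu> (Cube c s) \<longrightarrow> doubling \<mu> (Cube w L) \<longrightarrow>
    cube c s \<subseteq> cube w L \<longrightarrow> measure \<mu> (cube w L) \<le> 2 * measure \<mu> (cube c s) \<longrightarrow>
    \<bar>mean \<mu> (Cube c s) f - mean \<mu> (Cube w L) f\<bar> \<le> CA * measure \<mu> (cube c s) powr (-1/p)"
proof -
  obtain B where B: "\<forall>Q\<in>cubesQ \<mu>.
      set_integrable \<mu> (cset Q) (\<lambda>x. \<bar>f x - mean \<mu> (star \<mu> Q) f\<bar> powr q) \<and>
      measure \<mu> (cset (dil 2 Q)) powr (1/p - 1/q) *
        (LINT x:cset Q|\<mu>. \<bar>f x - mean \<mu> (star \<mu> Q) f\<bar> powr q) powr (1/q) \<le> B"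
    using f unfolding campanato_def by blast
  define CA where "CA = 2 * max B 1 * (2 ^ (DIM('a) + 2)) powr (1/q - 1/p)"
  show ?thesis
  proof (intro exI[of _ CA] conjI allI impI)
    show "0 \<le> CA"
      by (simp add: CA_def)
    fix c s w L
    assume dQ: "doubling \<mu> (Cube c s)" and dR: "doubling \<mu> (Cube w L)"
      and sub: "cube c s \<subseteq> cube w L" and comparable: "measure \<mu> (cube w L) \<le> 2 * measure \<mu> (cube c s)"
    have "Cube w L \<in> cubesQ \<mu>"
      using dR by (simp add: doubling_def)
    then have "set_integrable \<mu> (cube w L) (\<lambda>x. \<bar>f x - mean \<mu> (Cube w L) f\<bar> powr q)"
      "measure \<mu> (cube w (2 * L)) powr (1/p - 1/q) *
         (LINT x:cube w L|\<mu>. \<bar>f x - mean \<mu> (Cube w L) f\<bar> powr q) powr (1/q) \<le> max B 1"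
      using B star_doubling[OF dR] by force+
    moreover have "set_integrable \<mu> (cube c s) f"
      using f compact_cube unfolding campanato_def L1_loc_def by blast
    ultimately have "\<bar>mean \<mu> (Cube c s) f - mean \<mu> (Cube w L) f\<bar>
        \<le> 2 * max B 1 * measure \<mu> (cube c s) powr (-1/q) * measure \<mu> (cube w (2 * L)) powr (1/q - 1/p)"
      using mean_diff_le_oscillation[OF dQ dR sub] q by simp
    also have "\<dots> \<le> 2 * max B 1 * ((2 ^ (DIM('a) + 2)) powr (1/q - 1/p) * measure \<mu> (cube c s) powr (-1/p))"
      unfolding mult.assoc
    proof (intro mult_left_mono powr_le_of_le_mult)
      show "0 < measure \<mu> (cube c s)"
        using dQ by (simp add: doubling_Cube_iff)
      have "measure \<mu> (cube w (2 * L)) \<le> 2 ^ (DIM('a) + 1) * measure \<mu> (cube w L)"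
        using dR by (simp add: doubling_Cube_iff)
      also have "\<dots> \<le> 2 ^ (DIM('a) + 1) * (2 * measure \<mu> (cube c s))"
        using comparable by (intro mult_left_mono) auto
      finally show "measure \<mu> (cube w (2 * L)) \<le> 2 ^ (DIM('a) + 2) * measure \<mu> (cube c s)"
        by simp
    qed (use q in auto)
    finally show "\<bar>mean \<mu> (Cube c s) f - mean \<mu> (Cube w L) f\<bar> \<le> CA * measure \<mu> (cube c s) powr (-1/p)"
      by (simp add: CA_def mult_ac)
  qed
qed

lemma campanato_mean_diff_Kconst:
  assumes f: "campanato \<mu> n p q f"
  shows "\<exists>CB\<ge>0. \<forall>c s w L. doubling \<mu> (Cube c s) \<longrightarrow> doubling \<mu> (Cube w L) \<longrightarrow>
    cube c s \<subseteq> cube w L \<longrightarrow>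
    \<bar>mean \<mu> (Cube c s) f - mean \<mu> (Cube w L) f\<bar>
      \<le> CB * Kconst \<mu> n (Cube c s) (Cube w L) * measure \<mu> (cube c s) powr (-1/p)"
proof -
  obtain B where B: "\<forall>Q\<in>cubesQ2 \<mu>. \<forall>R\<in>cubesQ2 \<mu>. cset Q \<subseteq> cset R \<longrightarrow>
      measure \<mu> (cset Q) powr (1/p) * \<bar>mean \<mu> Q f - mean \<mu> R f\<bar> / Kconst \<mu> n Q R \<le> B"
    using f unfolding campanato_def by blast
  show ?thesis
  proof (intro exI[of _ "max B 0"] conjI allI impI)
    fix c s w L
    assume dQ: "doubling \<mu> (Cube c s)" and dR: "doubling \<mu> (Cube w L)" and sub: "cube c s \<subseteq> cube w L"
    define K where "K = Kconst \<mu> n (Cube c s) (Cube w L)"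
    define b where "b = measure \<mu> (cube c s)"
    have b: "0 < b"
      using dQ by (simp add: doubling_Cube_iff b_def)
    have K: "1 \<le> K"
      unfolding K_def by (rule Kconst_ge_1)
    have "b powr (1/p) * \<bar>mean \<mu> (Cube c s) f - mean \<mu> (Cube w L) f\<bar> / K \<le> max B 0"
      using B dQ dR sub by (force simp: cubesQ2_def b_def K_def)
    then have "\<bar>mean \<mu> (Cube c s) f - mean \<mu> (Cube w L) f\<bar> \<le> max B 0 * K / b powr (1/p)"
      using K b by (simp add: divide_le_eq le_divide_eq mult.commute)
    then show "\<bar>mean \<mu> (Cube c s) f - mean \<mu> (Cube w L) f\<bar> \<le> max B 0 * K * measure \<mu> (cube c s) powr (-1/p)"
      by (simp add: b_def powr_minus divide_inverse)
  qed simp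
qed

lemma campanato_integrable:
  assumes fin: "emeasure \<mu> UNIV < \<infinity>" and q: "1 \<le> q" and f: "campanato \<mu> n p q f"
  shows "integrable \<mu> f"
proof (rule integrable_if_integrable_powr_dist)
  show "finite_measure \<mu>"
    using fin space_eq_UNIV by (intro finite_measureI) simp
  show "f \<in> borel_measurable \<mu>"
    using f by (simp add: campanato_def L1_loc_def)
  have "Whole \<in> cubesQ \<mu>"
    using fin by (simp add: cubesQ_def)
  then show "integrable \<mu> (\<lambda>x. \<bar>f x - mean \<mu> (star \<mu> Whole) f\<bar> powr q)"
    using f by (auto simp: campanato_def set_integrable_def)
qed (rule q)

end

section \<open>Dyadic cubes around a point of the support\<close>

locale dyadic_cubes = growth_measure +
  fixes z :: "'a::euclidean_space"
  assumes centre_in_supp: "z \<in> supp \<mu>"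
begin

abbreviation dyadic_mass :: "nat \<Rightarrow> real" where
  "dyadic_mass e \<equiv> measure \<mu> (cube z (2 ^ e))"

abbreviation dyadic_doubling :: "nat \<Rightarrow> bool" where
  "dyadic_doubling e \<equiv> doubling \<mu> (Cube z (2 ^ e))"

lemma dyadic_mass_pos: "0 < dyadic_mass e"
  using measure_cube_pos[OF centre_in_supp] by simp

lemma dyadic_mass_mono: "e \<le> e' \<Longrightarrow> dyadic_mass e \<le> dyadic_mass e'"
  by (intro measure_cube_mono cube_mono) simp

lemma dyadic_mass_growth: "dyadic_mass e \<le> C0 * (2 ^ e) powr n"
  using measure_cube_growth[OF centre_in_supp] by simp

lemma dyadic_mass_across_nondoubling:
  assumes "\<And>i. e \<le> i \<Longrightarrow> i < e + k \<Longrightarrow> \<not> dyadic_doubling i"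
  shows "2 ^ ((DIM('a) + 1) * k) * dyadic_mass e \<le> dyadic_mass (e + k)"
  using assms
proof (induction k)
  case 0
  then show ?case
    by simp
next
  case (Suc k)
  have "2 ^ ((DIM('a) + 1) * Suc k) * dyadic_mass e
      = 2 ^ (DIM('a) + 1) * (2 ^ ((DIM('a) + 1) * k) * dyadic_mass e)"
    by (simp add: power_add mult_ac)
  also have "\<dots> \<le> 2 ^ (DIM('a) + 1) * dyadic_mass (e + k)"
    using Suc by (intro mult_left_mono) auto
  also have "\<dots> \<le> measure \<mu> (cube z (2 * 2 ^ (e + k)))"
    by (rule measure_double_cube_if_not_doubling) (use Suc.prems in auto)
  also have "(2::real) * 2 ^ (e + k) = 2 ^ (e + Suc k)"
    by simp
  finally show ?case .
qed

text \<open>Going down from scale \<open>2^h\<close>, every non-doubling dyadic step divides the mass by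
  \<open>2^(d+1)\<close>; starting from the growth bound at scale \<open>2^h\<close> this gives decay like
  \<open>side^(d+1)\<close>.\<close>

lemma dyadic_mass_le_before_doubling:
  assumes eh: "e \<le> h" and no_doubling: "\<And>i. e \<le> i \<Longrightarrow> i < h \<Longrightarrow> \<not> dyadic_doubling i"
  shows "dyadic_mass e \<le> C0 * (2 ^ e) ^ (DIM('a) + 1) * (2 ^ h) powr (n - real (DIM('a) + 1))"
proof -
  define D where "D = DIM('a) + 1"
  define S :: real where "S = 2 ^ h"
  obtain k where h: "h = e + k"
    using eh le_iff_add by blast
  have S: "0 < S"
    by (simp add: S_def)
  have "S ^ D * dyadic_mass e = (2 ^ e) ^ D * (2 ^ (D * k) * dyadic_mass e)"
    by (simp add: S_def h power_add power_mult_distrib power_mult[symmetric] mult_ac)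
  also have "\<dots> \<le> (2 ^ e) ^ D * dyadic_mass h"
    using dyadic_mass_across_nondoubling[of e k] no_doubling
    by (intro mult_left_mono) (auto simp: D_def h)
  also have "\<dots> \<le> (2 ^ e) ^ D * (C0 * S powr n)"
    using dyadic_mass_growth[of h] by (intro mult_left_mono) (auto simp: S_def)
  also have "S powr n = S ^ D * S powr (n - real D)"
    using S by (simp add: powr_realpow[symmetric] powr_add[symmetric])
  finally have "S ^ D * dyadic_mass e \<le> S ^ D * (C0 * (2 ^ e) ^ D * S powr (n - real D))"
    by (simp add: mult_ac)
  then show ?thesis
    using S by (simp add: D_def S_def)
qed

lemma measure_cube_le_below_doubling:
  assumes a: "1 \<le> a" "a \<le> u"
    and no_doubling: "\<And>e. a < 2 ^ e \<Longrightarrow> e < h \<Longrightarrow> \<not> dyadic_doubling e"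
  shows "measure \<mu> (cube z u) \<le> C0 * (2 * u) ^ (DIM('a) + 1) * (2 ^ h) powr (n - real (DIM('a) + 1))"
proof -
  define D where "D = DIM('a) + 1"
  define S :: real where "S = 2 ^ h"
  have u: "0 < u" and S: "0 < S"
    using a by (auto simp: S_def)
  have nD: "n - real D \<le> 0"
    using n_le_DIM by (simp add: D_def)
  show ?thesis
  proof (cases "S \<le> u")
    case True
    have "measure \<mu> (cube z u) \<le> C0 * u powr n"
      using measure_cube_growth[OF centre_in_supp u] .
    also have "\<dots> = C0 * (u ^ D * u powr (n - real D))"
      using u by (simp add: powr_realpow[symmetric] powr_add[symmetric])
    also have "\<dots> \<le> C0 * ((2 * u) ^ D * S powr (n - real D))"
      using C0_pos u S True nD
      by (intro mult_left_mono mult_mono power_mono powr_mono2') auto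
    finally show ?thesis
      by (simp add: D_def S_def mult_ac)
  next
    case False
    obtain e where e: "u < 2 ^ e" "2 ^ e \<le> 2 * u"
      using exists_power_of_two_between a by (meson order_trans)
    have "e \<le> h"
    proof (rule ccontr)
      assume "\<not> e \<le> h"
      then have "(2::real) ^ Suc h \<le> 2 ^ e"
        by (intro power_increasing) auto
      then show False
        using e False by (simp add: S_def)
    qed
    have "measure \<mu> (cube z u) \<le> dyadic_mass e"
      using e by (intro measure_cube_mono cube_mono) simp
    also have "\<dots> \<le> C0 * (2 ^ e) ^ D * S powr (n - real D)"
    proof (unfold D_def S_def, rule dyadic_mass_le_before_doubling[OF \<open>e \<le> h\<close>])
      fix i assume "e \<le> i" "i < h"
      moreover have "a < 2 ^ i"
        using e a \<open>e \<le> i\<close> power_increasing[of e i "2::real"] by linarith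
      ultimately show "\<not> dyadic_doubling i"
        using no_doubling by blast
    qed
    also have "\<dots> \<le> C0 * (2 * u) ^ D * S powr (n - real D)"
      using C0_pos e by (intro mult_right_mono mult_left_mono power_mono) auto
    finally show ?thesis
      by (simp add: D_def S_def)
  qed
qed

lemma dyadic_doubling_unbounded: "\<exists>e\<ge>k. dyadic_doubling e"
proof (rule ccontr)
  assume "\<not> (\<exists>e\<ge>k. dyadic_doubling e)"
  then have no_doubling: "\<not> dyadic_doubling e" if "2 ^ k < (2::real) ^ e" for e
    using that by (auto simp: power_strict_increasing_iff)
  define c where "c = C0 * (2 * 2 ^ k) ^ (DIM('a) + 1)"
  have bound: "dyadic_mass k \<le> c * (2 ^ h) powr (n - real (DIM('a) + 1))" for h
    unfolding c_def using no_doubling by (intro measure_cube_le_below_doubling[of "2 ^ k"]) auto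
  have "filterlim (\<lambda>h. (2::real) ^ h) at_top sequentially"
    by (rule filterlim_at_infinity_imp_filterlim_at_top[OF filterlim_realpow_sequentially_gt1]) auto
  then have "(\<lambda>h. c * ((2::real) ^ h) powr (n - real (DIM('a) + 1))) \<longlonglongrightarrow> c * 0"
    using n_le_DIM by (intro tendsto_mult tendsto_const tendsto_neg_powr) auto
  then have "dyadic_mass k \<le> 0"
    using bound by (intro LIMSEQ_le_const) auto
  then show False
    using dyadic_mass_pos[of k] by simp
qed

definition doubling_above :: "real \<Rightarrow> nat" where
  "doubling_above a = (LEAST e. dyadic_doubling e \<and> a \<le> 2 ^ e)"

lemma doubling_above: "dyadic_doubling (doubling_above a)" "a \<le> 2 ^ doubling_above a"
proof -
  obtain k :: nat where "a \<le> real k"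
    using real_arch_simple by blast
  moreover obtain e where "k \<le> e" "dyadic_doubling e"
    using dyadic_doubling_unbounded by blast
  moreover have "real k < 2 ^ k" "(2::real) ^ k \<le> 2 ^ e"
    using \<open>k \<le> e\<close> by (auto intro: power_increasing)
  ultimately have "dyadic_doubling e \<and> a \<le> 2 ^ e"
    by linarith
  then have "dyadic_doubling (doubling_above a) \<and> a \<le> 2 ^ doubling_above a"
    unfolding doubling_above_def by (rule LeastI)
  then show "dyadic_doubling (doubling_above a)" "a \<le> 2 ^ doubling_above a"
    by auto
qed

lemma not_doubling_below_doubling_above:
  "e < doubling_above a \<Longrightarrow> a \<le> 2 ^ e \<Longrightarrow> \<not> dyadic_doubling e"
  using not_less_Least[of e "\<lambda>e. dyadic_doubling e \<and> a \<le> 2 ^ e"] by (auto simp: doubling_above_def)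

lemma doubling_above_mono: "a \<le> b \<Longrightarrow> doubling_above a \<le> doubling_above b"
  unfolding doubling_above_def[of a] by (rule Least_le) (use doubling_above[of b] in auto)

lemma measure_shifted_cube_le_below_doubling:
  assumes w: "w \<in> cube z L" and L: "1 \<le> L" "L \<le> t"
    and no_doubling: "\<And>e. 2 * L < 2 ^ e \<Longrightarrow> e < h \<Longrightarrow> \<not> dyadic_doubling e"
  shows "measure \<mu> (cube w t)
    \<le> C0 * 4 ^ (DIM('a) + 1) * (2 ^ h) powr (n - real (DIM('a) + 1)) * t powr (real DIM('a) + 1)"
proof -
  define D where "D = DIM('a) + 1"
  have "cube w t \<subseteq> cube z (2 * t)"
    using cube_subset_shifted_cube[of z w L t] cube_mono[of "t + L" "2 * t" z] w L
    by (auto simp: mem_cube_commute)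
  then have "measure \<mu> (cube w t) \<le> measure \<mu> (cube z (2 * t))"
    by (rule measure_cube_mono)
  also have "\<dots> \<le> C0 * (2 * (2 * t)) ^ D * (2 ^ h) powr (n - real D)"
    unfolding D_def using L no_doubling by (intro measure_cube_le_below_doubling[of "2 * L"]) auto
  also have "(2 * (2 * t)) ^ D = 4 ^ D * t powr (real DIM('a) + 1)"
  proof -
    have "t powr real D = t ^ D"
      using L by (intro powr_realpow) auto
    then show ?thesis
      by (simp add: D_def power_mult_distrib add.commute)
  qed
  finally show ?thesis
    by (simp add: D_def mult_ac)
qed

lemma Kconst_le_Kmax:
  assumes w: "w \<in> cube z L" and L: "1 \<le> L" and Lh: "2 * L \<le> 2 ^ h"
    and no_doubling: "\<And>e. 2 * L < 2 ^ e \<Longrightarrow> e < h \<Longrightarrow> \<not> dyadic_doubling e"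
  shows "Kconst \<mu> n (Cube w L) (Cube z (2 ^ h)) \<le> Kmax"
proof -
  define D where "D = DIM('a) + 1"
  define E where "E = real DIM('a) + 1 - n"
  define S :: real where "S = 2 ^ h"
  define A where "A = C0 * 4 ^ D * S powr (n - real D)"
  have S: "0 < S" "L \<le> S"
    using L Lh by (auto simp: S_def)
  have A: "0 \<le> A"
    using C0_pos by (simp add: A_def)
  have E: "0 \<le> E" "E \<le> real D"
    using n_pos n_le_DIM by (auto simp: E_def D_def)
  have "delta \<mu> n (Cube w L) (Cube z S) \<le> A * (S + L) powr E"
    unfolding E_def
  proof (rule delta_le_of_measure_bound)
    show "0 < L" "L \<le> S + L"
      using L S by auto
    show "cube z S \<subseteq> cube w (S + L)"
      by (rule cube_subset_shifted_cube[OF w])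
    show "measure \<mu> (cube w t) \<le> A * t powr (real DIM('a) + 1)" if "L \<le> t" for t
      unfolding A_def D_def S_def using w L that no_doubling
      by (intro measure_shifted_cube_le_below_doubling) auto
  qed (fact A)
  also have "\<dots> \<le> A * (2 * S) powr E"
    using S L E A by (intro mult_left_mono powr_mono2) auto
  also have "(2 * S) powr E \<le> 2 ^ D * S powr E"
    using S E by (simp add: powr_mult powr_realpow[symmetric] powr_mono mult_right_mono)
  then have "A * (2 * S) powr E \<le> A * (2 ^ D * S powr E)"
    using A by (rule mult_left_mono)
  also have "\<dots> = C0 * 8 ^ D"
    using S
    by (simp add: A_def E_def D_def powr_add[symmetric] mult_ac flip: power_mult_distrib)
  finally show ?thesis
    by (simp add: Kconst_def Kmax_def S_def D_def)
qed

lemma Kconst_consecutive_le_Kmax: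
  assumes "g < h" "\<And>e. g < e \<Longrightarrow> e < h \<Longrightarrow> \<not> dyadic_doubling e"
  shows "Kconst \<mu> n (Cube z (2 ^ g)) (Cube z (2 ^ h)) \<le> Kmax"
proof (rule Kconst_le_Kmax)
  show "z \<in> cube z (2 ^ g)" "1 \<le> (2::real) ^ g"
    by (auto intro: centre_in_cube)
  show "2 * 2 ^ g \<le> (2::real) ^ h"
    using assms(1) by (metis power_Suc power_increasing Suc_leI one_le_numeral)
  show "\<not> dyadic_doubling e" if "2 * 2 ^ g < (2::real) ^ e" "e < h" for e
    using that assms(2)[of e] by (auto simp flip: power_Suc simp: power_strict_increasing_iff)
qed

lemma cube_subset_doubling_above:
  assumes "z \<in> cube w L"
  shows "cube w L \<subseteq> cube z (2 ^ doubling_above (2 * L))"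
  using cube_subset_shifted_cube[OF assms, of L] cube_mono doubling_above(2)[of "2 * L"]
  by (metis mult_2 order_trans)

lemma Kconst_doubling_above_le_Kmax:
  assumes "z \<in> cube w L" "1 \<le> L"
  shows "Kconst \<mu> n (Cube w L) (Cube z (2 ^ doubling_above (2 * L))) \<le> Kmax"
  using assms doubling_above(2) not_doubling_below_doubling_above
  by (intro Kconst_le_Kmax) (auto simp: mem_cube_commute)

definition doubling_side :: "nat \<Rightarrow> real" where
  "doubling_side k = 2 ^ doubling_above (real k)"

lemma doubling_side_doubling: "doubling \<mu> (Cube z (doubling_side k))"
  using doubling_above(1) by (simp add: doubling_side_def)

lemma doubling_side_mono: "k \<le> l \<Longrightarrow> doubling_side k \<le> doubling_side l"
  unfolding doubling_side_def by (intro power_increasing doubling_above_mono) auto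

lemma doubling_side_ge: "real k \<le> doubling_side k"
  using doubling_above(2) by (simp add: doubling_side_def)

lemma incseq_doubling_cubes: "incseq (\<lambda>k. cube z (doubling_side k))"
  unfolding incseq_def by (metis cube_mono doubling_side_mono)

lemma doubling_side_exhaustion:
  "\<forall>k. 0 < doubling_side k \<and> Cube z (doubling_side k) \<in> cubesQ2 \<mu>
     \<and> cube z (doubling_side k) \<subseteq> cube z (doubling_side (Suc k))"
  "(\<Union>k. cube z (doubling_side k)) = UNIV"
proof -
  show "\<forall>k. 0 < doubling_side k \<and> Cube z (doubling_side k) \<in> cubesQ2 \<mu>
      \<and> cube z (doubling_side k) \<subseteq> cube z (doubling_side (Suc k))"
    using doubling_side_doubling doubling_side_mono[of k "Suc k" for k]
    by (auto simp: cubesQ2_def doubling_side_def intro!: cube_mono)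
  show "(\<Union>k. cube z (doubling_side k)) = UNIV"
    using doubling_side_ge by (rule UN_cube_eq_UNIV)
qed

lemma measure_doubling_side_at_top:
  assumes "emeasure \<mu> UNIV = \<infinity>"
  shows "filterlim (\<lambda>k. measure \<mu> (cube z (doubling_side k))) at_top sequentially"
proof -
  have "(\<lambda>k. emeasure \<mu> (cube z (real k))) \<longlonglongrightarrow> emeasure \<mu> (\<Union>k. cube z (real k))"
    by (intro Lim_emeasure_incseq) (auto simp: incseq_def intro!: cube_mono)
  then have lim: "(\<lambda>k. emeasure \<mu> (cube z (real k))) \<longlonglongrightarrow> \<infinity>"
    using assms UN_cube_eq_UNIV[of "\<lambda>k. real k" z] by simp
  show ?thesis
    unfolding filterlim_at_top
  proof
    fix Y :: real
    have "\<forall>\<^sub>F k in sequentially. ennreal (max Y 0) < emeasure \<mu> (cube z (real k))"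
      using lim by (rule order_tendstoD(1)) simp
    then show "\<forall>\<^sub>F k in sequentially. Y \<le> measure \<mu> (cube z (doubling_side k))"
    proof (rule eventually_mono)
      fix k assume "ennreal (max Y 0) < emeasure \<mu> (cube z (real k))"
      then have "max Y 0 < measure \<mu> (cube z (real k))"
        by (simp add: emeasure_cube ennreal_less_iff)
      also have "\<dots> \<le> measure \<mu> (cube z (doubling_side k))"
        using doubling_side_ge by (intro measure_cube_mono cube_mono)
      finally show "Y \<le> measure \<mu> (cube z (doubling_side k))"
        by simp
    qed
  qed
qed

lemma limit_of_means_finite:
  assumes fin: "emeasure \<mu> UNIV < \<infinity>" and f: "integrable \<mu> f"
  shows "doubling_limit \<mu> f (mean \<mu> Whole f)
    \<and> (\<lambda>k. mean \<mu> (Cube z (doubling_side k)) f) \<longlonglongrightarrow> mean \<mu> Whole f"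
proof
  show "doubling_limit \<mu> f (mean \<mu> Whole f)"
    unfolding doubling_limit_def using fin
    by (auto simp: Whole_in_cubesQ2_iff UNIV_subset_cset_iff intro!: bexI[of _ Whole])
  interpret finite_measure \<mu>
    using fin space_eq_UNIV by (intro finite_measureI) simp
  have "0 < measure \<mu> (cube z (2 ^ 0))"
    by (rule dyadic_mass_pos)
  also have "\<dots> \<le> measure \<mu> (space \<mu>)"
    by (rule bounded_measure)
  finally have "measure \<mu> (space \<mu>) \<noteq> 0"
    by simp
  then have "(\<lambda>k. (LINT x:cube z (doubling_side k)|\<mu>. f x) / measure \<mu> (cube z (doubling_side k)))
      \<longlonglongrightarrow> (LINT x:space \<mu>|\<mu>. f x) / measure \<mu> (space \<mu>)"
    using f doubling_side_exhaustion(2) incseq_doubling_cubes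
    by (intro tendsto_set_average_exhaustion finite_measure_axioms) (auto simp: space_eq_UNIV)
  then show "(\<lambda>k. mean \<mu> (Cube z (doubling_side k)) f) \<longlonglongrightarrow> mean \<mu> Whole f"
    by (simp add: mean_def space_eq_UNIV)
qed

end

section \<open>Chaining the estimates of the Campanato norm\<close>

locale campanato_chain = dyadic_cubes +
  fixes p CA CB :: real and f :: "'a \<Rightarrow> real"
  assumes p_pos: "0 < p" and CA_nonneg: "0 \<le> CA" and CB_nonneg: "0 \<le> CB"
    and mean_diff_comparable: "\<And>c s w L. doubling \<mu> (Cube c s) \<Longrightarrow> doubling \<mu> (Cube w L) \<Longrightarrow>
      cube c s \<subseteq> cube w L \<Longrightarrow> measure \<mu> (cube w L) \<le> 2 * measure \<mu> (cube c s) \<Longrightarrow>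
      \<bar>mean \<mu> (Cube c s) f - mean \<mu> (Cube w L) f\<bar> \<le> CA * measure \<mu> (cube c s) powr (-1/p)"
    and mean_diff_Kconst: "\<And>c s w L. doubling \<mu> (Cube c s) \<Longrightarrow> doubling \<mu> (Cube w L) \<Longrightarrow>
      cube c s \<subseteq> cube w L \<Longrightarrow>
      \<bar>mean \<mu> (Cube c s) f - mean \<mu> (Cube w L) f\<bar>
        \<le> CB * Kconst \<mu> n (Cube c s) (Cube w L) * measure \<mu> (cube c s) powr (-1/p)"
begin

abbreviation dyadic_mean :: "nat \<Rightarrow> real" where
  "dyadic_mean e \<equiv> mean \<mu> (Cube z (2 ^ e)) f"

definition chain_const :: real where
  "chain_const = (CA + CB * Kmax) / (1 - 2 powr (-1/p))"

lemma chain_const: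
  "0 \<le> chain_const" "CA + CB * Kmax + 2 powr (-1/p) * chain_const = chain_const"
  "CA \<le> chain_const"
proof -
  have d: "0 < 1 - 2 powr (-1/p)"
    using p_pos by (simp add: powr_less_one)
  have "0 \<le> CB * Kmax"
    using CB_nonneg Kmax_pos by simp
  then show nonneg: "0 \<le> chain_const"
    unfolding chain_const_def using d CA_nonneg by (intro divide_nonneg_pos) auto
  have "chain_const * (1 - 2 powr (-1/p)) = CA + CB * Kmax"
    unfolding chain_const_def using d p_pos by simp
  then have "chain_const - 2 powr (-1/p) * chain_const = CA + CB * Kmax"
    by (simp add: right_diff_distrib mult.commute)
  then show "CA + CB * Kmax + 2 powr (-1/p) * chain_const = chain_const"
    by linarith
  moreover have "0 \<le> 2 powr (-1/p) * chain_const"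
    using nonneg by simp
  ultimately show "CA \<le> chain_const"
    using \<open>0 \<le> CB * Kmax\<close> by linarith
qed

lemma dyadic_mass_powr_antimono: "e \<le> e' \<Longrightarrow> dyadic_mass e' powr (-1/p) \<le> dyadic_mass e powr (-1/p)"
  using p_pos dyadic_mass_pos dyadic_mass_mono by (intro powr_mono2') auto

lemma mean_diff_consecutive_doubling:
  assumes "dyadic_doubling g" "dyadic_doubling h" "g < h"
    and "\<And>e. g < e \<Longrightarrow> e < h \<Longrightarrow> \<not> dyadic_doubling e"
  shows "\<bar>dyadic_mean g - dyadic_mean h\<bar> \<le> CB * Kmax * dyadic_mass g powr (-1/p)"
proof -
  have "\<bar>dyadic_mean g - dyadic_mean h\<bar>
      \<le> CB * Kconst \<mu> n (Cube z (2 ^ g)) (Cube z (2 ^ h)) * dyadic_mass g powr (-1/p)"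
    using assms by (intro mean_diff_Kconst) (auto intro!: cube_mono power_increasing)
  also have "\<dots> \<le> CB * Kmax * dyadic_mass g powr (-1/p)"
    using Kconst_consecutive_le_Kmax[OF assms(3,4)] CB_nonneg
    by (intro mult_right_mono mult_left_mono) auto
  finally show ?thesis .
qed

lemma mass_doubling_step:
  assumes "dyadic_doubling e" "dyadic_doubling e'" "2 * dyadic_mass e < dyadic_mass e'"
  obtains g h where "e \<le> g" "g < h" "h \<le> e'" "dyadic_doubling g" "dyadic_doubling h"
    "\<And>x. g < x \<Longrightarrow> x < h \<Longrightarrow> \<not> dyadic_doubling x"
    "dyadic_mass g \<le> 2 * dyadic_mass e" "2 * dyadic_mass e < dyadic_mass h"
proof -
  define h where "h = (LEAST h. dyadic_doubling h \<and> 2 * dyadic_mass e < dyadic_mass h)"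
  have h: "dyadic_doubling h" "2 * dyadic_mass e < dyadic_mass h"
    unfolding h_def by (rule LeastI2[of _ e'], use assms in auto)+
  have "h \<le> e'"
    unfolding h_def by (rule Least_le) (use assms in auto)
  have "e < h"
    using h(2) dyadic_mass_mono[of h e] dyadic_mass_pos[of e] by (cases "h \<le> e") auto
  then obtain g where g: "e \<le> g" "g < h" "dyadic_doubling g"
    "\<And>x. g < x \<Longrightarrow> x < h \<Longrightarrow> \<not> dyadic_doubling x"
    using exists_last_before[of dyadic_doubling e h] assms(1) by blast
  have "dyadic_mass g \<le> 2 * dyadic_mass e"
    using not_less_Least[of g "\<lambda>h. dyadic_doubling h \<and> 2 * dyadic_mass e < dyadic_mass h"] g
    by (auto simp: h_def)
  then show thesis
    using that g h \<open>h \<le> e'\<close> by blast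
qed

text \<open>Split off the part of the chain up to the first doubling cube of more than twice the
  mass; on the rest the bound is scaled by \<open>2 powr (-1/p)\<close>, so the constants add up to a
  geometric series.\<close>

lemma mean_diff_dyadic_doubling:
  assumes "dyadic_doubling e" "dyadic_doubling e'" "e \<le> e'"
  shows "\<bar>dyadic_mean e - dyadic_mean e'\<bar> \<le> chain_const * dyadic_mass e powr (-1/p)"
  using assms
proof (induction "e' - e" arbitrary: e e' rule: less_induct)
  case less
  define r where "r = dyadic_mass e powr (-1/p)"
  show ?case
  proof (cases "dyadic_mass e' \<le> 2 * dyadic_mass e")
    case True
    then have "\<bar>dyadic_mean e - dyadic_mean e'\<bar> \<le> CA * r"
      using less.prems unfolding r_def
      by (intro mean_diff_comparable) (auto intro!: cube_mono power_increasing)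
    also have "\<dots> \<le> chain_const * r"
      using chain_const(3) by (intro mult_right_mono) (auto simp: r_def)
    finally show ?thesis
      by (simp add: r_def)
  next
    case False
    then obtain g h where gh: "e \<le> g" "g < h" "h \<le> e'" "dyadic_doubling g" "dyadic_doubling h"
      "\<And>x. g < x \<Longrightarrow> x < h \<Longrightarrow> \<not> dyadic_doubling x"
      "dyadic_mass g \<le> 2 * dyadic_mass e" "2 * dyadic_mass e < dyadic_mass h"
      using mass_doubling_step[OF less.prems(1,2)] by (metis not_le)
    have "\<bar>dyadic_mean e - dyadic_mean g\<bar> \<le> CA * r"
      using less.prems(1) gh unfolding r_def
      by (intro mean_diff_comparable) (auto intro!: cube_mono power_increasing)
    moreover have "\<bar>dyadic_mean g - dyadic_mean h\<bar> \<le> CB * Kmax * r"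
      using mean_diff_consecutive_doubling[OF gh(4,5,2,6)]
        mult_left_mono[OF dyadic_mass_powr_antimono[OF gh(1)], of "CB * Kmax"] CB_nonneg Kmax_pos
      by (simp add: r_def)
    moreover have "\<bar>dyadic_mean h - dyadic_mean e'\<bar> \<le> chain_const * (2 powr (-1/p) * r)"
    proof -
      have "\<bar>dyadic_mean h - dyadic_mean e'\<bar> \<le> chain_const * dyadic_mass h powr (-1/p)"
        using less.prems gh by (intro less.hyps) auto
      also have "dyadic_mass h powr (-1/p) \<le> (2 * dyadic_mass e) powr (-1/p)"
        using p_pos gh(8) dyadic_mass_pos[of e] by (intro powr_mono2') auto
      also have "\<dots> = 2 powr (-1/p) * r"
        by (simp add: r_def powr_mult)
      finally show ?thesis
        using chain_const(1) by (simp add: mult_left_mono)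
    qed
    ultimately have "\<bar>dyadic_mean e - dyadic_mean e'\<bar> \<le> (CA + CB * Kmax + 2 powr (-1/p) * chain_const) * r"
      by (simp add: algebra_simps)
    then show ?thesis
      unfolding chain_const(2) r_def .
  qed
qed

lemma mean_diff_doubling_superset:
  assumes dR: "doubling \<mu> (Cube w L)" and e: "dyadic_doubling e" and sub: "cube z (2 ^ e) \<subseteq> cube w L"
  shows "\<bar>mean \<mu> (Cube w L) f - dyadic_mean e\<bar> \<le> (CB * Kmax + chain_const) * dyadic_mass e powr (-1/p)"
proof -
  define h where "h = doubling_above (2 * L)"
  have z: "z \<in> cube w L"
    using sub centre_in_cube[of "2 ^ e" z] by auto
  have L: "2 ^ e \<le> L"
    by (rule cube_side_le_if_subset[OF _ sub]) simp
  then have "1 \<le> L"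
    using one_le_power[of "2::real" e] by linarith
  have "(2::real) ^ e < 2 ^ h"
    using L \<open>1 \<le> L\<close> doubling_above(2)[of "2 * L"] unfolding h_def by linarith
  then have "e \<le> h"
    using power_strict_increasing_iff[of "2::real" e h] by simp
  have mass_le: "measure \<mu> (cube w L) powr (-1/p) \<le> dyadic_mass e powr (-1/p)"
  proof (rule powr_mono2')
    show "-1/p \<le> 0"
      using p_pos by simp
    show "0 < dyadic_mass e"
      by (rule dyadic_mass_pos)
    show "dyadic_mass e \<le> measure \<mu> (cube w L)"
      by (rule measure_cube_mono[OF sub])
  qed
  have K_le: "CB * Kconst \<mu> n (Cube w L) (Cube z (2 ^ h)) \<le> CB * Kmax"
    unfolding h_def using CB_nonneg Kconst_doubling_above_le_Kmax[OF z \<open>1 \<le> L\<close>]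
    by (rule mult_left_mono[rotated])
  have "CB * Kconst \<mu> n (Cube w L) (Cube z (2 ^ h)) * measure \<mu> (cube w L) powr (-1/p)
      \<le> CB * Kmax * dyadic_mass e powr (-1/p)"
    by (rule mult_mono[OF K_le mass_le]) (use CB_nonneg Kmax_pos in auto)
  moreover have "\<bar>mean \<mu> (Cube w L) f - dyadic_mean h\<bar>
      \<le> CB * Kconst \<mu> n (Cube w L) (Cube z (2 ^ h)) * measure \<mu> (cube w L) powr (-1/p)"
    unfolding h_def by (rule mean_diff_Kconst[OF dR doubling_above(1) cube_subset_doubling_above[OF z]])
  ultimately have "\<bar>mean \<mu> (Cube w L) f - dyadic_mean h\<bar> \<le> CB * Kmax * dyadic_mass e powr (-1/p)"
    by linarith
  moreover have "\<bar>dyadic_mean e - dyadic_mean h\<bar> \<le> chain_const * dyadic_mass e powr (-1/p)"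
    using mean_diff_dyadic_doubling[OF e _ \<open>e \<le> h\<close>] doubling_above(1) by (simp add: h_def)
  ultimately show ?thesis
    by (simp add: algebra_simps)
qed

lemma mean_diff_superset_doubling_side:
  assumes inf: "emeasure \<mu> UNIV = \<infinity>"
    and R: "R \<in> cubesQ2 \<mu>" "cset (Cube z (doubling_side k)) \<subseteq> cset R"
  shows "\<bar>mean \<mu> R f - mean \<mu> (Cube z (doubling_side k)) f\<bar>
    \<le> (CB * Kmax + chain_const) * measure \<mu> (cube z (doubling_side k)) powr (-1/p)"
proof -
  obtain w L where "R = Cube w L"
    using R(1) inf by (cases R) (auto simp: Whole_in_cubesQ2_iff)
  then show ?thesis
    using mean_diff_doubling_superset[of w L "doubling_above (real k)"] R doubling_above(1)
    by (simp add: doubling_side_def cubesQ2_def)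
qed

lemma limit_of_means_infinite:
  assumes inf: "emeasure \<mu> UNIV = \<infinity>"
  shows "\<exists>M. doubling_limit \<mu> f M \<and> (\<lambda>k. mean \<mu> (Cube z (doubling_side k)) f) \<longlonglongrightarrow> M"
proof -
  define X where "X k = mean \<mu> (Cube z (doubling_side k)) f" for k
  define \<rho> where "\<rho> k = measure \<mu> (cube z (doubling_side k)) powr (-1/p)" for k
  have \<rho>: "\<rho> \<longlonglongrightarrow> 0"
    unfolding \<rho>_def using measure_doubling_side_at_top[OF inf] p_pos by (intro tendsto_neg_powr) auto
  have tail: "\<bar>X k - X l\<bar> \<le> chain_const * \<rho> k" if "k \<le> l" for k l
    using mean_diff_dyadic_doubling[OF doubling_above(1) doubling_above(1) doubling_above_mono] that
    by (simp add: X_def \<rho>_def doubling_side_def)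
  have "(\<lambda>k. chain_const * \<rho> k) \<longlonglongrightarrow> 0"
    using \<rho> by (rule tendsto_mult_right_zero)
  then have "\<exists>M. X \<longlonglongrightarrow> M \<and> (\<forall>k. \<bar>X k - M\<bar> \<le> chain_const * \<rho> k)"
    by (intro convergent_if_tail_bound tail)
  then obtain M where M: "X \<longlonglongrightarrow> M" "\<And>k. \<bar>X k - M\<bar> \<le> chain_const * \<rho> k"
    by blast
  have "doubling_limit \<mu> f M"
    unfolding doubling_limit_def
  proof (intro allI impI)
    fix \<epsilon> :: real assume "0 < \<epsilon>"
    have "(\<lambda>k. (CB * Kmax + 2 * chain_const) * \<rho> k) \<longlonglongrightarrow> 0"
      using \<rho> by (rule tendsto_mult_right_zero)
    from LIMSEQ_D[OF this \<open>0 < \<epsilon>\<close>] obtain k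
      where "norm ((CB * Kmax + 2 * chain_const) * \<rho> k - 0) < \<epsilon>"
      by blast
    then have k: "(CB * Kmax + chain_const) * \<rho> k + chain_const * \<rho> k < \<epsilon>"
      by (simp add: algebra_simps)
    show "\<exists>Q\<in>cubesQ2 \<mu>. \<forall>R\<in>cubesQ2 \<mu>. cset Q \<subseteq> cset R \<longrightarrow> \<bar>mean \<mu> R f - M\<bar> \<le> \<epsilon>"
    proof (intro bexI ballI impI)
      show "Cube z (doubling_side k) \<in> cubesQ2 \<mu>"
        using doubling_side_exhaustion(1) by blast
      fix R assume "R \<in> cubesQ2 \<mu>" "cset (Cube z (doubling_side k)) \<subseteq> cset R"
      then have "\<bar>mean \<mu> R f - X k\<bar> \<le> (CB * Kmax + chain_const) * \<rho> k"
        unfolding X_def \<rho>_def by (rule mean_diff_superset_doubling_side[OF inf])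
      then show "\<bar>mean \<mu> R f - M\<bar> \<le> \<epsilon>"
        using M(2)[of k] k by linarith
    qed
  qed
  then show ?thesis
    using M(1) unfolding X_def by blast
qed

end

lemma (in dyadic_cubes) limit_of_means:
  assumes q: "1 \<le> q" "q \<le> p" and f: "campanato \<mu> n p q f"
  shows "\<exists>M. doubling_limit \<mu> f M \<and> (\<lambda>k. mean \<mu> (Cube z (doubling_side k)) f) \<longlonglongrightarrow> M"
proof (cases "emeasure \<mu> UNIV < \<infinity>")
  case True
  then show ?thesis
    using limit_of_means_finite campanato_integrable q f by blast
next
  case False
  obtain CA where CA: "0 \<le> CA" "\<forall>c s w L. doubling \<mu> (Cube c s) \<longrightarrow> doubling \<mu> (Cube w L) \<longrightarrow>
      cube c s \<subseteq> cube w L \<longrightarrow> measure \<mu> (cube w L) \<le> 2 * measure \<mu> (cube c s) \<longrightarrow>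
      \<bar>mean \<mu> (Cube c s) f - mean \<mu> (Cube w L) f\<bar> \<le> CA * measure \<mu> (cube c s) powr (-1/p)"
    using campanato_mean_diff_comparable[OF q f] by blast
  obtain CB where CB: "0 \<le> CB" "\<forall>c s w L. doubling \<mu> (Cube c s) \<longrightarrow> doubling \<mu> (Cube w L) \<longrightarrow>
      cube c s \<subseteq> cube w L \<longrightarrow> \<bar>mean \<mu> (Cube c s) f - mean \<mu> (Cube w L) f\<bar>
        \<le> CB * Kconst \<mu> n (Cube c s) (Cube w L) * measure \<mu> (cube c s) powr (-1/p)"
    using campanato_mean_diff_Kconst[OF f] by blast
  interpret campanato_chain \<mu> C0 n z p CA CB f
    using CA CB q by unfold_locales auto
  show ?thesis
    using False by (intro limit_of_means_infinite) (simp add: less_top[symmetric])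
qed

theorem proposition1:
  fixes \<mu> :: "'a::euclidean_space measure" and C0 n p q :: real and f :: "'a \<Rightarrow> real"
  assumes "radon_measure \<mu>" and "emeasure \<mu> UNIV > 0"
    and "C0 > 0" and "0 < n" and "n \<le> DIM('a)"
    and "growth \<mu> C0 n"
    and "1 \<le> q" and "q \<le> p"
    and "campanato \<mu> n p q f"
  shows "(\<exists>M. \<forall>\<epsilon>>0. \<exists>Q\<in>cubesQ2 \<mu>. \<forall>R\<in>cubesQ2 \<mu>.
            cset Q \<subseteq> cset R \<longrightarrow> \<bar>mean \<mu> R f - M\<bar> \<le> \<epsilon>)
       \<and> (\<exists>z s. (\<forall>k. 0 < s k \<and> Cube z (s k) \<in> cubesQ2 \<mu>
                    \<and> cube z (s k) \<subseteq> cube z (s (Suc k)))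
              \<and> Cauchy (\<lambda>k. mean \<mu> (Cube z (s k)) f)
              \<and> (\<Union>k. cube z (s k)) = UNIV)"
proof -
  interpret growth_measure \<mu> C0 n
    using assms by unfold_locales
  obtain z where "z \<in> supp \<mu>"
    using supp_nonempty assms(2) by blast
  then interpret dyadic_cubes \<mu> C0 n z
    by unfold_locales
  show ?thesis
    using limit_of_means[OF assms(7-9)] doubling_side_exhaustion LIMSEQ_imp_Cauchy
    unfolding doubling_limit_def by blast
qed

end
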